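(* Let $A\in\mathbb{R}^{p\times n}$ satisfy $A\mathbf{1}=\mathbf{0}$ and let $K\ge 1$ be an integer. Put $\beta=-\min_{i,j}(A^TA)_{ij}$, $\tilde A=\begin{bmatrix}\sqrt{\beta}\,\mathbf{1}^T\\ A\end{bmatrix}$, $W=\tilde A^T\tilde A$ and $L=\operatorname{diag}(W\mathbf{1})-W$. Then the K-means problem $$\min_{D\in\mathbb{R}^{p\times K},\,X}\|A-DX\|_F^2\quad\text{s.t. }X\in\mathcal{H}$$ and the ratio-cut problem $$\min_{X}\operatorname{tr}\{XLX^T\}\quad\text{s.t. }X\in\mathcal{H}$$ have the same solutions $X$.
   Context: $\mathbf{1}$ is the all-ones vector and $\operatorname{diag}(v)$ the diagonal matrix with diagonal $v$. $\mathcal{F}$ is the set of indicator matrices $F\in\{0,1\}^{K\times n}$ in which every column has exactly one entry equal to $1$ (row $k$ indicates membership of the samples in cluster $C_k$, of size $n_k=F_kF_k^T$, assumed nonzero). $\mathcal{H}=\{(FF^T)^{-1/2}F: F\in\mathcal{F}\}$ is the set of normalized indicator matrices (row $k$ equals $F_k/\sqrt{n_k}$). *)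

theory Defs
  imports "HOL-Analysis.Analysis"
begin

text \<open>Matrices are rendered with type-indexed dimensions: a p x n real matrix is
  a value of type real^'n^'p (rows indexed by 'p, columns by 'n).\<close>

definition ones :: "real^'n" where
  "ones = (\<chi> j. 1)"

definition diag_mat :: "real^'n \<Rightarrow> real^'n^'n" where
  "diag_mat v = (\<chi> i j. if i = j then v $ i else 0)"

definition frob_sq :: "real^'n^'m \<Rightarrow> real" where
  "frob_sq M = (\<Sum>i\<in>UNIV. \<Sum>j\<in>UNIV. (M $ i $ j)^2)"

definition indicator_mats :: "(real^'n^'k) set" where
  "indicator_mats = {F. (\<forall>k j. F $ k $ j = 0 \<or> F $ k $ j = 1)
      \<and> (\<forall>j. \<exists>!k. F $ k $ j = 1)
      \<and> (\<forall>k. (\<Sum>j\<in>UNIV. F $ k $ j) \<noteq> 0)}"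

text \<open>Normalization (F F^T)^{-1/2} F: row k divided by sqrt n_k.\<close>
definition normalize_ind :: "real^'n^'k \<Rightarrow> real^'n^'k" where
  "normalize_ind F = (\<chi> k j. F $ k $ j / sqrt (\<Sum>l\<in>UNIV. F $ k $ l))"

definition normalized_ind_mats :: "(real^'n^'k) set" where
  "normalized_ind_mats = normalize_ind ` indicator_mats"

definition beta_of :: "real^'n^'p \<Rightarrow> real" where
  "beta_of A = - Min {(transpose A ** A) $ i $ j | i j. True}"

text \<open>Augmented matrix [sqrt beta 1^T; A], with an extra row indexed by Inl ().\<close>
definition A_tilde :: "real^'n^'p \<Rightarrow> real^'n^(unit + 'p)" where
  "A_tilde A = (\<chi> r. case r of Inl _ \<Rightarrow> sqrt (beta_of A) *\<^sub>R ones | Inr i \<Rightarrow> A $ i)"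

definition W_of :: "real^'n^'p \<Rightarrow> real^'n^'n" where
  "W_of A = transpose (A_tilde A) ** A_tilde A"

definition L_of :: "real^'n^'p \<Rightarrow> real^'n^'n" where
  "L_of A = diag_mat (W_of A *v ones) - W_of A"

definition kmeans_solution :: "real^'n^'p \<Rightarrow> real^'n^'k \<Rightarrow> bool" where
  "kmeans_solution A X \<longleftrightarrow> X \<in> normalized_ind_mats \<and>
     (\<exists>D :: real^'k^'p. \<forall>(D' :: real^'k^'p) X'. X' \<in> normalized_ind_mats \<longrightarrow>
        frob_sq (A - D ** X) \<le> frob_sq (A - D' ** X'))"

definition ratiocut_solution :: "real^'n^'n \<Rightarrow> real^'n^'k \<Rightarrow> bool" where
  "ratiocut_solution L X \<longleftrightarrow> X \<in> normalized_ind_mats \<and>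
     (\<forall>X' :: real^'n^'k. X' \<in> normalized_ind_mats \<longrightarrow> trace (X ** L ** transpose X) \<le> trace (X' ** L ** transpose X'))"

end

theory Submission
  imports Defs
begin

text \<open>For every \<open>X \<in> \<H>\<close> the rows of \<open>X\<close> are orthonormal, so \<open>D X\<close> ranges over matrices whose rows
  lie in the row space of \<open>X\<close>, and Pythagoras gives
  \<open>\<parallel>A - D X\<parallel>\<^sup>2 = \<parallel>A\<parallel>\<^sup>2 - \<parallel>A X\<^sup>T\<parallel>\<^sup>2 + \<parallel>D - A X\<^sup>T\<parallel>\<^sup>2\<close>. Minimising over \<open>D\<close> shows that the K-means
  solutions are exactly the maximisers of \<open>\<parallel>A X\<^sup>T\<parallel>\<^sup>2\<close> over \<open>\<H>\<close>.
  On the other hand \<open>W = \<beta> 1 1\<^sup>T + A\<^sup>T A\<close> and \<open>A 1 = 0\<close> give \<open>W 1 = n \<beta> 1\<close>, hence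
  \<open>L = n \<beta> I - \<beta> 1 1\<^sup>T - A\<^sup>T A\<close> and
  \<open>tr (X L X\<^sup>T) = \<beta> (n K - \<Sum>\<^sub>k (1\<^sup>T x\<^sub>k)\<^sup>2) - \<parallel>A X\<^sup>T\<parallel>\<^sup>2\<close>. For a normalized indicator matrix
  \<open>(1\<^sup>T x\<^sub>k)\<^sup>2 = n\<^sub>k\<close>, which sums to \<open>n\<close>, so the ratio cut is a constant minus \<open>\<parallel>A X\<^sup>T\<parallel>\<^sup>2\<close>
  as well. Only \<open>\<bar>\<beta>\<bar> = (sqrt \<beta>)\<^sup>2\<close> enters, so neither the value nor the sign of \<open>\<beta>\<close> matters.\<close>

lemma ones_nth [simp]: "ones $ i = 1"
  by (simp add: ones_def)

lemma frob_sq_nonneg: "frob_sq M \<ge> 0"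
  unfolding frob_sq_def by (intro sum_nonneg) simp

lemma frob_sq_zero [simp]: "frob_sq 0 = 0"
  by (simp add: frob_sq_def)

lemma frob_sq_transpose:
  fixes M :: "real^'n^'m"
  shows "frob_sq (transpose M) = frob_sq M"
  unfolding frob_sq_def transpose_def by (simp, rule sum.swap)

lemma frob_sq_eq_sum_norm_rows:
  fixes M :: "real^'n^'m"
  shows "frob_sq M = (\<Sum>i\<in>UNIV. (norm (M $ i))\<^sup>2)"
  unfolding frob_sq_def power2_norm_eq_inner inner_vec_def by (simp add: power2_eq_square)

lemma matrix_mult_row:
  fixes D :: "real^'k^'p" and X :: "real^'n^'k"
  shows "(D ** X) $ i = D $ i v* X"
  by (simp add: vec_eq_iff matrix_matrix_mult_def vector_matrix_mult_def mult.commute)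

lemma norm_vector_matrix_mult_orthonormal_rows:
  fixes X :: "real^'n^'k"
  assumes "X ** transpose X = mat 1"
  shows "norm (d v* X) = norm d"
proof -
  have "(d v* X) \<bullet> (d v* X) = d \<bullet> (X *v (transpose X *v d))"
    by (simp add: dot_lmul_matrix)
  also have "\<dots> = d \<bullet> d"
    by (simp only: matrix_vector_mul_assoc assms matrix_vector_mul_lid)
  finally show ?thesis
    by (simp add: norm_eq_sqrt_inner)
qed

lemma norm_diff_vector_matrix_mult_orthonormal_rows:
  fixes X :: "real^'n^'k"
  assumes "X ** transpose X = mat 1"
  shows "(norm (a - d v* X))\<^sup>2 = (norm a)\<^sup>2 - (norm (X *v a))\<^sup>2 + (norm (d - X *v a))\<^sup>2"
proof -
  have "a \<bullet> (d v* X) = (X *v a) \<bullet> d"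
    by (metis dot_lmul_matrix inner_commute)
  moreover have "(d v* X) \<bullet> (d v* X) = d \<bullet> d"
    using norm_vector_matrix_mult_orthonormal_rows[OF assms] by (simp add: norm_eq_sqrt_inner)
  ultimately show ?thesis
    by (simp add: power2_norm_eq_inner inner_diff inner_commute)
qed

lemma frob_sq_diff_orthonormal_rows:
  fixes A :: "real^'n^'p" and D :: "real^'k^'p" and X :: "real^'n^'k"
  assumes "X ** transpose X = mat 1"
  shows "frob_sq (A - D ** X)
       = frob_sq A - frob_sq (A ** transpose X) + frob_sq (D - A ** transpose X)"
  unfolding frob_sq_eq_sum_norm_rows
  by (simp add: matrix_mult_row norm_diff_vector_matrix_mult_orthonormal_rows[OF assms]
      sum.distrib sum_subtractf)

lemma matrix_mult_transpose_nth:
  fixes B :: "real^'n^'m" and X :: "real^'n^'k"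
  shows "(B ** transpose X) $ i $ k = B $ i \<bullet> X $ k"
  by (simp add: matrix_matrix_mult_def transpose_def inner_vec_def)

lemma trace_conj_eq_sum_quadratic_forms:
  fixes X :: "real^'n^'k" and M :: "real^'n^'n"
  shows "trace (X ** M ** transpose X) = (\<Sum>k\<in>UNIV. X $ k \<bullet> (M *v X $ k))"
  unfolding trace_def matrix_mult_transpose_nth
  unfolding matrix_mult_row dot_lmul_matrix ..

lemma frob_sq_mult_transpose_eq_sum_norm:
  fixes A :: "real^'n^'p" and X :: "real^'n^'k"
  shows "frob_sq (A ** transpose X) = (\<Sum>k\<in>UNIV. (norm (A *v X $ k))\<^sup>2)"
proof -
  have rows: "transpose (A ** transpose X) $ k = A *v X $ k" for k
    by (simp add: matrix_transpose_mul matrix_mult_row)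
  have "frob_sq (A ** transpose X) = frob_sq (transpose (A ** transpose X))"
    by (simp only: frob_sq_transpose)
  also have "\<dots> = (\<Sum>k\<in>UNIV. (norm (A *v X $ k))\<^sup>2)"
    by (simp only: frob_sq_eq_sum_norm_rows rows)
  finally show ?thesis .
qed

lemma sum_inner_rows_orthonormal:
  fixes X :: "real^'n^'k"
  assumes "X ** transpose X = mat 1"
  shows "(\<Sum>k\<in>UNIV. X $ k \<bullet> X $ k) = real CARD('k)"
proof -
  have "X $ k \<bullet> X $ k = 1" for k
    using arg_cong[OF assms, of "\<lambda>M. M $ k $ k"] by (simp add: matrix_mult_transpose_nth mat_def)
  then show ?thesis
    by simp
qed

lemma indicator_mats_column:
  fixes F :: "real^'n^'k"
  assumes "F \<in> indicator_mats"
  obtains c where "\<And>k. F $ k $ j = (if k = c then 1 else 0)"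
proof -
  obtain c where "F $ c $ j = 1" and "\<And>k. F $ k $ j = 1 \<Longrightarrow> k = c"
    using assms unfolding indicator_mats_def by blast
  moreover have "F $ k $ j = 0 \<or> F $ k $ j = 1" for k
    using assms unfolding indicator_mats_def by blast
  ultimately show thesis
    using that by (metis zero_neq_one)
qed

lemma indicator_mats_column_sum:
  fixes F :: "real^'n^'k"
  assumes "F \<in> indicator_mats"
  shows "(\<Sum>k\<in>UNIV. F $ k $ j) = 1"
  by (rule indicator_mats_column[OF assms, of j]) simp

lemma indicator_mats_cluster_size_pos:
  fixes F :: "real^'n^'k"
  assumes "F \<in> indicator_mats"
  shows "(\<Sum>j\<in>UNIV. F $ k $ j) > 0"
proof -
  have "F $ k $ j \<ge> 0" for j
    by (metis assms indicator_mats_column order.refl zero_le_one)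
  then have "(\<Sum>j\<in>UNIV. F $ k $ j) \<ge> 0"
    by (simp add: sum_nonneg)
  moreover have "(\<Sum>j\<in>UNIV. F $ k $ j) \<noteq> 0"
    using assms unfolding indicator_mats_def by blast
  ultimately show ?thesis
    by linarith
qed

lemma normalized_ind_mats_orthonormal_rows:
  fixes X :: "real^'n^'k"
  assumes "X \<in> normalized_ind_mats"
  shows "X ** transpose X = mat 1"
proof -
  obtain F where F: "F \<in> indicator_mats" and X: "X = normalize_ind F"
    using assms unfolding normalized_ind_mats_def by blast
  define N where "N k = (\<Sum>j\<in>UNIV. F $ k $ j)" for k
  have N: "N k > 0" for k
    unfolding N_def by (rule indicator_mats_cluster_size_pos[OF F])
  have FF: "F $ k $ j * F $ k' $ j = (if k = k' then F $ k $ j else 0)" for k k' j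
    by (rule indicator_mats_column[OF F, of j]) auto
  have "(\<Sum>j\<in>UNIV. X $ k $ j * X $ k' $ j) = (if k = k' then 1 else 0)" for k k'
  proof -
    have "(\<Sum>j\<in>UNIV. X $ k $ j * X $ k' $ j)
        = (\<Sum>j\<in>UNIV. F $ k $ j * F $ k' $ j) / (sqrt (N k) * sqrt (N k'))"
      by (simp add: X normalize_ind_def N_def[symmetric] sum_divide_distrib)
    also have "\<dots> = (if k = k' then 1 else 0)"
      using N[of k] by (cases "k = k'") (simp_all add: FF N_def[symmetric])
    finally show ?thesis .
  qed
  then show ?thesis
    by (simp add: vec_eq_iff matrix_matrix_mult_def transpose_def mat_def)
qed

lemma normalized_ind_mats_sum_sq_row_sums:
  fixes X :: "real^'n^'k"
  assumes "X \<in> normalized_ind_mats"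
  shows "(\<Sum>k\<in>UNIV. (ones \<bullet> X $ k)\<^sup>2) = real CARD('n)"
proof -
  obtain F where F: "F \<in> indicator_mats" and X: "X = normalize_ind F"
    using assms unfolding normalized_ind_mats_def by blast
  define N where "N k = (\<Sum>j\<in>UNIV. F $ k $ j)" for k
  have "(ones \<bullet> X $ k)\<^sup>2 = N k" for k
  proof -
    have pos: "N k > 0"
      unfolding N_def by (rule indicator_mats_cluster_size_pos[OF F])
    have "ones \<bullet> X $ k = N k / sqrt (N k)"
      by (simp add: X normalize_ind_def ones_def inner_vec_def N_def sum_divide_distrib)
    also have "\<dots> = sqrt (N k)"
      using pos by (metis less_imp_le real_div_sqrt)
    finally show ?thesis
      using pos by (metis less_imp_le real_sqrt_pow2)
  qed
  then have "(\<Sum>k\<in>UNIV. (ones \<bullet> X $ k)\<^sup>2) = (\<Sum>k\<in>UNIV. \<Sum>j\<in>UNIV. F $ k $ j)"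
    by (simp add: N_def)
  also have "\<dots> = (\<Sum>j\<in>UNIV. \<Sum>k\<in>UNIV. F $ k $ j)"
    by (rule sum.swap)
  also have "\<dots> = real CARD('n)"
    by (simp add: indicator_mats_column_sum[OF F])
  finally show ?thesis .
qed

lemma W_of_entry:
  fixes A :: "real^'n^'p"
  shows "W_of A $ i $ j = \<bar>beta_of A\<bar> + (transpose A ** A) $ i $ j"
proof -
  have "W_of A $ i $ j = (\<Sum>r\<in>UNIV <+> UNIV. A_tilde A $ r $ i * A_tilde A $ r $ j)"
    by (simp add: W_of_def matrix_matrix_mult_def transpose_def)
  also have "\<dots> = \<bar>beta_of A\<bar> + (transpose A ** A) $ i $ j"
    by (subst sum.Plus) (simp_all add: A_tilde_def ones_def matrix_matrix_mult_def transpose_def)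
  finally show ?thesis .
qed

lemma W_of_mult_vector:
  fixes A :: "real^'n^'p"
  shows "W_of A *v x = (\<bar>beta_of A\<bar> * (ones \<bullet> x)) *\<^sub>R ones + (A *v x) v* A"
proof -
  have "(\<Sum>j\<in>UNIV. (transpose A ** A) $ i $ j * x $ j) = ((A *v x) v* A) $ i" for i
  proof -
    have "(\<Sum>j\<in>UNIV. (transpose A ** A) $ i $ j * x $ j)
        = (\<Sum>j\<in>UNIV. \<Sum>r\<in>UNIV. A $ r $ i * A $ r $ j * x $ j)"
      by (simp add: matrix_matrix_mult_def transpose_def sum_distrib_right)
    also have "\<dots> = (\<Sum>r\<in>UNIV. \<Sum>j\<in>UNIV. A $ r $ i * A $ r $ j * x $ j)"
      by (rule sum.swap)
    also have "\<dots> = ((A *v x) v* A) $ i"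
      by (simp add: matrix_vector_mult_def vector_matrix_mult_def sum_distrib_left ac_simps)
    finally show ?thesis .
  qed
  then show ?thesis
    by (simp add: vec_eq_iff matrix_vector_mult_def W_of_entry inner_vec_def ones_def
        distrib_right sum.distrib sum_distrib_left)
qed

lemma W_of_mult_ones:
  fixes A :: "real^'n^'p"
  assumes "A *v ones = 0"
  shows "W_of A *v ones = (\<bar>beta_of A\<bar> * real CARD('n)) *\<^sub>R ones"
proof -
  have "ones \<bullet> (ones :: real^'n) = real CARD('n)"
    by (simp add: inner_vec_def ones_def)
  then show ?thesis
    by (simp add: W_of_mult_vector assms)
qed

lemma diag_mat_mult_vector: "diag_mat v *v x = (\<chi> i. v $ i * x $ i)"
  by (simp add: vec_eq_iff diag_mat_def matrix_vector_mult_def if_distrib[of "\<lambda>a. a * _"] cong: if_cong)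

lemma L_of_quadratic_form:
  fixes A :: "real^'n^'p"
  assumes "A *v ones = 0"
  shows "x \<bullet> (L_of A *v x)
       = \<bar>beta_of A\<bar> * (real CARD('n) * (x \<bullet> x) - (ones \<bullet> x)\<^sup>2) - (norm (A *v x))\<^sup>2"
proof -
  have "L_of A *v x = (\<bar>beta_of A\<bar> * real CARD('n)) *\<^sub>R x - W_of A *v x"
    by (simp add: L_of_def matrix_vector_mult_diff_rdistrib diag_mat_mult_vector
        W_of_mult_ones[OF assms] vec_eq_iff)
  then have "x \<bullet> (L_of A *v x) = \<bar>beta_of A\<bar> * real CARD('n) * (x \<bullet> x)
      - \<bar>beta_of A\<bar> * (ones \<bullet> x) * (x \<bullet> ones) - x \<bullet> ((A *v x) v* A)"
    by (simp add: W_of_mult_vector inner_diff_right inner_add_right)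
  moreover have "x \<bullet> ((A *v x) v* A) = (norm (A *v x))\<^sup>2"
    by (metis dot_lmul_matrix inner_commute power2_norm_eq_inner)
  ultimately show ?thesis
    by (simp add: power2_eq_square inner_commute right_diff_distrib)
qed

definition projection_maximizer :: "real^'n^'p \<Rightarrow> real^'n^'k \<Rightarrow> bool" where
  "projection_maximizer A X \<longleftrightarrow> X \<in> normalized_ind_mats \<and>
     (\<forall>X' :: real^'n^'k. X' \<in> normalized_ind_mats \<longrightarrow>
        frob_sq (A ** transpose X') \<le> frob_sq (A ** transpose X))"

lemma kmeans_solution_iff:
  fixes A :: "real^'n^'p" and X :: "real^'n^'k"
  shows "kmeans_solution A X \<longleftrightarrow> projection_maximizer A X"
proof -
  have lower: "frob_sq A - frob_sq (A ** transpose Y) \<le> frob_sq (A - D ** Y)"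
    if "Y \<in> normalized_ind_mats" for D :: "real^'k^'p" and Y :: "real^'n^'k"
    using frob_sq_nonneg[of "D - A ** transpose Y"]
    by (simp add: frob_sq_diff_orthonormal_rows normalized_ind_mats_orthonormal_rows[OF that])
  have attained: "frob_sq (A - (A ** transpose Y) ** Y) = frob_sq A - frob_sq (A ** transpose Y)"
    if "Y \<in> normalized_ind_mats" for Y :: "real^'n^'k"
    by (simp add: frob_sq_diff_orthonormal_rows normalized_ind_mats_orthonormal_rows[OF that])
  show ?thesis
  proof
    assume "kmeans_solution A X"
    then obtain D :: "real^'k^'p" where X: "X \<in> normalized_ind_mats"
      and min: "\<And>(D' :: real^'k^'p) (X' :: real^'n^'k). X' \<in> normalized_ind_mats \<Longrightarrow>
        frob_sq (A - D ** X) \<le> frob_sq (A - D' ** X')"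
      unfolding kmeans_solution_def by metis
    have "frob_sq (A ** transpose X') \<le> frob_sq (A ** transpose X)"
      if X': "X' \<in> normalized_ind_mats" for X' :: "real^'n^'k"
    proof -
      have "frob_sq A - frob_sq (A ** transpose X) \<le> frob_sq (A - D ** X)"
        by (rule lower[OF X])
      also have "\<dots> \<le> frob_sq (A - (A ** transpose X') ** X')"
        by (rule min[OF X'])
      also have "\<dots> = frob_sq A - frob_sq (A ** transpose X')"
        by (rule attained[OF X'])
      finally show ?thesis
        by simp
    qed
    with X show "projection_maximizer A X"
      unfolding projection_maximizer_def by blast
  next
    assume "projection_maximizer A X"
    then have max: "X \<in> normalized_ind_mats"
      "\<And>X' :: real^'n^'k. X' \<in> normalized_ind_mats \<Longrightarrow>
        frob_sq (A ** transpose X') \<le> frob_sq (A ** transpose X)"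
      unfolding projection_maximizer_def by blast+
    have "frob_sq (A - (A ** transpose X) ** X) \<le> frob_sq (A - D' ** X')"
      if X': "X' \<in> normalized_ind_mats" for D' :: "real^'k^'p" and X' :: "real^'n^'k"
    proof -
      have "frob_sq (A - (A ** transpose X) ** X) = frob_sq A - frob_sq (A ** transpose X)"
        by (rule attained[OF max(1)])
      also have "\<dots> \<le> frob_sq A - frob_sq (A ** transpose X')"
        using max(2)[OF X'] by simp
      also have "\<dots> \<le> frob_sq (A - D' ** X')"
        by (rule lower[OF X'])
      finally show ?thesis .
    qed
    with max show "kmeans_solution A X"
      unfolding kmeans_solution_def by blast
  qed
qed

lemma trace_conj_L_of:
  fixes A :: "real^'n^'p" and X :: "real^'n^'k"
  assumes "A *v ones = 0" and "X \<in> normalized_ind_mats"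
  shows "trace (X ** L_of A ** transpose X)
       = \<bar>beta_of A\<bar> * real CARD('n) * (real CARD('k) - 1) - frob_sq (A ** transpose X)"
proof -
  have "trace (X ** L_of A ** transpose X) = (\<Sum>k\<in>UNIV. \<bar>beta_of A\<bar> *
      (real CARD('n) * (X $ k \<bullet> X $ k) - (ones \<bullet> X $ k)\<^sup>2) - (norm (A *v X $ k))\<^sup>2)"
    by (simp add: trace_conj_eq_sum_quadratic_forms L_of_quadratic_form[OF assms(1)])
  also have "\<dots> = \<bar>beta_of A\<bar> * (real CARD('n) * (\<Sum>k\<in>UNIV. X $ k \<bullet> X $ k)
      - (\<Sum>k\<in>UNIV. (ones \<bullet> X $ k)\<^sup>2)) - frob_sq (A ** transpose X)"
    by (simp add: frob_sq_mult_transpose_eq_sum_norm sum_subtractf sum_distrib_left right_diff_distrib)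
  also have "\<dots> = \<bar>beta_of A\<bar> * (real CARD('n) * real CARD('k) - real CARD('n))
      - frob_sq (A ** transpose X)"
    by (simp add: sum_inner_rows_orthonormal normalized_ind_mats_orthonormal_rows[OF assms(2)]
        normalized_ind_mats_sum_sq_row_sums[OF assms(2)])
  finally show ?thesis
    by (simp add: algebra_simps)
qed

lemma ratiocut_solution_L_of_iff:
  fixes A :: "real^'n^'p" and X :: "real^'n^'k"
  assumes "A *v ones = 0"
  shows "ratiocut_solution (L_of A) X \<longleftrightarrow> projection_maximizer A X"
proof -
  have "trace (Y ** L_of A ** transpose Y) \<le> trace (Z ** L_of A ** transpose Z)
      \<longleftrightarrow> frob_sq (A ** transpose Z) \<le> frob_sq (A ** transpose Y)"
    if "Y \<in> normalized_ind_mats" and "Z \<in> normalized_ind_mats" for Y Z :: "real^'n^'k"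
    using that by (simp add: trace_conj_L_of[OF assms])
  then show ?thesis
    unfolding ratiocut_solution_def projection_maximizer_def by blast
qed

theorem proposition2:
  fixes A :: "real^'n^'p"
  assumes "A *v ones = 0"
  shows "\<forall>X :: real^'n^'k. kmeans_solution A X \<longleftrightarrow> ratiocut_solution (L_of A) X"
  by (simp add: kmeans_solution_iff ratiocut_solution_L_of_iff[OF assms])

end
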